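(* Let $\mathcal{G}$ be an SPQN over binary random variables $X_1,\dots,X_N$ which is conditionally complete, conditionally decomposable and conditionally sound. Then for every node $v$ of $\mathcal{G}$, $\Psi_v$ is a normalized probability function over the variables indexed by $\mathrm{eff}(v)$ conditioned on the variables indexed by $\mathrm{cond}(v)$; precisely, for every $\mathbf b\in\{0,1,*\}^N$ with $b_i\in\{0,1\}$ for $i\in\mathrm{cond}(v)$ and $b_i=*$ for $i\notin\mathrm{cond}(v)$, $$\sum_{\substack{\mathbf x\in\{0,1,*\}^N:\\ x_i=b_i\ \forall i\notin \mathrm{eff}(v),\\ x_i\in\{0,1\}\ \forall i\in\mathrm{eff}(v)}}\Psi_v(\mathbf x)=1 .$$
   Context: An SPQN (Sum-Product-Quotient Network) over binary variables $X_1,\dots,X_N$ is a rooted directed acyclic computational graph evaluated on inputs $\mathbf x\in\{0,1,*\}^N$ ($*$ denotes a missing value). Its nodes are of four types. Leaves are indicators $\mathbb 1[x_i=a]$, $i\in[N]$, $a\in\{0,1\}$, whose value is $1$ if $x_i=a$, $0$ if $x_i=1-a$, and $1$ if $x_i=*$. A sum node $v$ outputs $\sum_{c}w_c\Psi_c(\mathbf x)$ over its children $c$, with strictly positive weights summing to $1$. A product node outputs $\prod_c\Psi_c(\mathbf x)$ over its children. A quotient node $v$ has exactly two children, a numerator $\mathrm{num}(v)$ and a denominator $\mathrm{den}(v)$, and outputs $\Psi_{\mathrm{num}(v)}(\mathbf x)/\Psi_{\mathrm{den}(v)}(\mathbf x)$. $\Psi_v$ denotes the function computed by the subgraph rooted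 at $v$; $\mathrm{ch}(v)$ is the set of children of $v$. Scope: $\mathrm{sc}(v)=\{i\}$ for a leaf of variable $i$, and $\mathrm{sc}(v)=\bigcup_{c\in\mathrm{ch}(v)}\mathrm{sc}(c)$ otherwise. Effective scope: $\mathrm{eff}(v)=\{i\}$ for a leaf of variable $i$; $\mathrm{eff}(v)=\bigcup_{c\in\mathrm{ch}(v)}\mathrm{eff}(c)$ for sum and product nodes; $\mathrm{eff}(v)=\mathrm{eff}(\mathrm{num}(v))\setminus\mathrm{eff}(\mathrm{den}(v))$ for quotient nodes. Conditioning scope: $\mathrm{cond}(v)=\mathrm{sc}(v)\setminus\mathrm{eff}(v)$. Conditionally complete: for every sum node $v$ and all $c_1,c_2\in\mathrm{ch}(v)$, $\mathrm{eff}(c_1)=\mathrm{eff}(c_2)$. Conditionally decomposable: for every product node $v$, (1) for all distinct $c_1,c_2\in\mathrm{ch}(v)$, $\mathrm{eff}(c_1)\cap\mathrm{eff}(c_2)=\emptyset$; and (2) the directed graph on vertex set $\mathrm{ch}(v)$ with an edge $c'\to c''$ whenever $\mathrm{eff}(c')\cap\mathrm{cond}(c'')\neq\emptyset$ is acyclic. Conditionally sound: for every quotient node $v$, $\Psi_{\mathrm{den}(v)}$ is strictly positive on all inputs, $\mathrm{cond}(\mathrm{den}(v))\subseteq\mathrm{cond}(\mathrm{num}(v))$, $\mathrm{eff}(\mathrm{den}(v))\subseteq\mathrm{eff}(\mathrm{num}(v))$, and for all $\mathbf a\in\{0,1,*\}^N$, $\Psi_{\mathrm{den}(v)}(\mathbf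 a)=\sum_{\mathbf z}\Psi_{\mathrm{num}(v)}(\mathbf z)$, the sum over $\mathbf z\in\{0,1,*\}^N$ with $z_i=a_i$ for $i\notin\mathrm{eff}(v)$ and $z_i\in\{0,1\}$ for $i\in\mathrm{eff}(v)$. *)

theory Defs
  imports Complex_Main
begin

text \<open>Values of an input: None = missing (*), Some False = 0, Some True = 1.
  An input over X_1..X_N is a function nat => bool option that is None outside {1..N}.\<close>

type_synonym input = "nat \<Rightarrow> bool option"

definition inputs :: "nat \<Rightarrow> input set" where
  "inputs N = {x. \<forall>i. i \<notin> {1..N} \<longrightarrow> x i = None}"

text \<open>A rooted DAG is represented by its (finite) unfolding into a term;
  every node of the DAG corresponds to a subterm.\<close>

datatype node =
    Leaf nat bool
  | SumN "(real \<times> node) list"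
  | ProdN "node list"
  | QuotN node node

fun Psi :: "node \<Rightarrow> input \<Rightarrow> real" where
  "Psi (Leaf i a) x = (case x i of None \<Rightarrow> 1 | Some b \<Rightarrow> (if b = a then 1 else 0))"
| "Psi (SumN cs) x = sum_list (map (\<lambda>p. fst p * Psi (snd p) x) cs)"
| "Psi (ProdN cs) x = prod_list (map (\<lambda>c. Psi c x) cs)"
| "Psi (QuotN n d) x = Psi n x / Psi d x"

fun sc :: "node \<Rightarrow> nat set" where
  "sc (Leaf i a) = {i}"
| "sc (SumN cs) = (\<Union>p\<in>set cs. sc (snd p))"
| "sc (ProdN cs) = (\<Union>c\<in>set cs. sc c)"
| "sc (QuotN n d) = sc n \<union> sc d"

fun eff :: "node \<Rightarrow> nat set" where
  "eff (Leaf i a) = {i}"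
| "eff (SumN cs) = (\<Union>p\<in>set cs. eff (snd p))"
| "eff (ProdN cs) = (\<Union>c\<in>set cs. eff c)"
| "eff (QuotN n d) = eff n - eff d"

definition cond :: "node \<Rightarrow> nat set" where
  "cond v = sc v - eff v"

fun nodes :: "node \<Rightarrow> node set" where
  "nodes (Leaf i a) = {Leaf i a}"
| "nodes (SumN cs) = insert (SumN cs) (\<Union>p\<in>set cs. nodes (snd p))"
| "nodes (ProdN cs) = insert (ProdN cs) (\<Union>c\<in>set cs. nodes c)"
| "nodes (QuotN n d) = insert (QuotN n d) (nodes n \<union> nodes d)"

definition completions :: "input \<Rightarrow> nat set \<Rightarrow> input set" where
  "completions a S = {z. (\<forall>i. i \<notin> S \<longrightarrow> z i = a i) \<and> (\<forall>i\<in>S. z i \<noteq> None)}"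

definition spqn :: "nat \<Rightarrow> node \<Rightarrow> bool" where
  "spqn N G \<longleftrightarrow> (\<forall>v\<in>nodes G.
      (case v of
        Leaf i a \<Rightarrow> i \<in> {1..N}
      | SumN cs \<Rightarrow> (\<forall>p\<in>set cs. fst p > 0) \<and> sum_list (map fst cs) = 1
      | _ \<Rightarrow> True))"

definition cond_complete :: "node \<Rightarrow> bool" where
  "cond_complete G \<longleftrightarrow> (\<forall>v\<in>nodes G.
      (case v of
        SumN cs \<Rightarrow> (\<forall>c1\<in>snd ` set cs. \<forall>c2\<in>snd ` set cs. eff c1 = eff c2)
      | _ \<Rightarrow> True))"

definition cond_decomposable :: "node \<Rightarrow> bool" where
  "cond_decomposable G \<longleftrightarrow> (\<forall>v\<in>nodes G.
      (case v of
        ProdN cs \<Rightarrow>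
          (\<forall>i<length cs. \<forall>j<length cs. i \<noteq> j \<longrightarrow> eff (cs ! i) \<inter> eff (cs ! j) = {}) \<and>
          acyclic {(i, j). i < length cs \<and> j < length cs \<and> eff (cs ! i) \<inter> cond (cs ! j) \<noteq> {}}
      | _ \<Rightarrow> True))"

definition cond_sound :: "nat \<Rightarrow> node \<Rightarrow> bool" where
  "cond_sound N G \<longleftrightarrow> (\<forall>v\<in>nodes G.
      (case v of
        QuotN n d \<Rightarrow>
          (\<forall>x\<in>inputs N. Psi d x > 0) \<and>
          cond d \<subseteq> cond n \<and> eff d \<subseteq> eff n \<and>
          (\<forall>a\<in>inputs N. Psi d a = (\<Sum>z\<in>completions a (eff (QuotN n d)). Psi n z))
      | _ \<Rightarrow> True))"

end

theory Submission
  imports Defs "HOL-Library.Multiset"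
begin

text \<open>At a sum node the weights sum to one and, by
  conditional completeness, every child sums over the same effective variables as the node.
  At a product node, acyclicity yields an order of the children in which no child conditions on
  an effective variable of a later one; summing out the later children first, each inner sum is
  one and the first factor is left, which is normalized on its own. At a quotient node the
  denominator does not depend on the summed-out variables and, by soundness, equals the summed
  numerator; no hypothesis on the numerator is needed.\<close>

lemma node_induct [case_names Leaf SumN ProdN QuotN]:
  assumes "\<And>i a. P (Leaf i a)"
    and "\<And>cs. (\<And>p. p \<in> set cs \<Longrightarrow> P (snd p)) \<Longrightarrow> P (SumN cs)"
    and "\<And>cs. (\<And>c. c \<in> set cs \<Longrightarrow> P c) \<Longrightarrow> P (ProdN cs)"
    and "\<And>n d. P n \<Longrightarrow> P d \<Longrightarrow> P (QuotN n d)"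
  shows "P v"
  by (induction v rule: node.induct) (auto intro: assms simp: snds.simps)

lemma nodes_subset: "u \<in> nodes v \<Longrightarrow> nodes u \<subseteq> nodes v"
  by (induction v rule: node_induct) auto

lemma spqn_subnode: "nodes u \<subseteq> nodes v \<Longrightarrow> spqn N v \<Longrightarrow> spqn N u"
  unfolding spqn_def by blast

lemma eff_subset_sc: "eff v \<subseteq> sc v"
  by (induction v rule: node_induct) auto

lemma finite_eff: "finite (eff v)"
  by (rule finite_subset[OF eff_subset_sc]) (induction v rule: node_induct, auto)

lemma sc_subset_vars: "spqn N v \<Longrightarrow> sc v \<subseteq> {1..N}"
proof (induction v rule: node_induct)
  case (SumN cs)
  have "spqn N (snd p)" if "p \<in> set cs" for p
    using that spqn_subnode[OF _ SumN.prems] by auto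
  then have "sc (snd p) \<subseteq> {1..N}" if "p \<in> set cs" for p
    using that SumN.IH by blast
  then show ?case by auto
next
  case (ProdN cs)
  have "spqn N c" if "c \<in> set cs" for c
    using that spqn_subnode[OF _ ProdN.prems] by auto
  then have "sc c \<subseteq> {1..N}" if "c \<in> set cs" for c
    using that ProdN.IH by blast
  then show ?case by auto
qed (auto simp: spqn_def)

lemma Psi_cong: "(\<And>i. i \<in> sc v \<Longrightarrow> x i = y i) \<Longrightarrow> Psi v x = Psi v y"
proof (induction v rule: node_induct)
  case (SumN cs)
  have "Psi (snd p) x = Psi (snd p) y" if "p \<in> set cs" for p
    by (rule SumN.IH[OF that]) (use that SumN.prems in auto)
  then show ?case by (simp cong: map_cong)
next
  case (ProdN cs)
  then have "Psi c x = Psi c y" if "c \<in> set cs" for c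
    using that by auto
  then show ?case by (simp cong: map_cong)
qed auto

lemma completions_empty: "completions b {} = {b}"
  unfolding completions_def by auto

lemma completions_singleton: "completions b {i} = {b(i := Some True), b(i := Some False)}"
proof -
  have "z = b(i := Some True) \<or> z = b(i := Some False)" if "z \<in> completions b {i}" for z
    using that unfolding completions_def by (cases "z i") (auto simp: fun_eq_iff)
  then show ?thesis unfolding completions_def by auto
qed

lemma completions_insert:
  assumes "i \<notin> S"
  shows "completions b (insert i S) \<subseteq> (\<lambda>(z, v). z(i := Some v)) ` (completions b S \<times> UNIV)"
proof
  fix z assume z: "z \<in> completions b (insert i S)"
  then obtain v where "z i = Some v" unfolding completions_def by auto
  then have "z = (z(i := b i))(i := Some v)" by auto
  moreover have "z(i := b i) \<in> completions b S"
    using z assms unfolding completions_def by auto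
  ultimately show "z \<in> (\<lambda>(z, v). z(i := Some v)) ` (completions b S \<times> UNIV)"
    by (intro image_eqI[where x = "(z(i := b i), v)"]) auto
qed

lemma finite_completions: "finite S \<Longrightarrow> finite (completions b S)"
  by (induction S rule: finite_induct)
     (auto simp: completions_empty intro: finite_subset[OF completions_insert])

lemma completions_subset_inputs:
  "b \<in> inputs N \<Longrightarrow> S \<subseteq> {1..N} \<Longrightarrow> completions b S \<subseteq> inputs N"
  unfolding completions_def inputs_def by (auto simp del: atLeastAtMost_iff)

lemma Psi_completions:
  "sc v \<inter> S = {} \<Longrightarrow> z \<in> completions b S \<Longrightarrow> Psi v z = Psi v b"
  unfolding completions_def by (rule Psi_cong) auto

text \<open>Group the completions by the map that resets their \<open>B\<close>-coordinates to \<open>b\<close>.\<close>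
lemma sum_completions_Un:
  assumes "finite A" "finite B" "A \<inter> B = {}"
  shows "(\<Sum>z\<in>completions b (A \<union> B). f z) = (\<Sum>y\<in>completions b A. \<Sum>z\<in>completions y B. f z)"
proof -
  define g where "g z = (\<lambda>j. if j \<in> B then b j else z j)" for z :: input
  have "g ` completions b (A \<union> B) \<subseteq> completions b A"
    using assms(3) unfolding g_def completions_def by auto
  moreover have "{z \<in> completions b (A \<union> B). g z = y} = completions y B"
    if "y \<in> completions b A" for y
    using that assms(3) unfolding g_def completions_def by (auto simp: fun_eq_iff)
  ultimately show ?thesis
    using sum.group[of "completions b (A \<union> B)" "completions b A" g f] assms(1,2)
    by (simp add: finite_completions)
qed

text \<open>Conditioning values are drawn from \<open>inputs N\<close> only, since soundness of quotient nodes
  is assumed only there.\<close>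
definition normalized :: "nat \<Rightarrow> node \<Rightarrow> bool" where
  "normalized N v \<longleftrightarrow> (\<forall>b\<in>inputs N. (\<forall>i\<in>cond v. b i \<noteq> None) \<longrightarrow>
     (\<Sum>x\<in>completions b (eff v). Psi v x) = 1)"

lemma normalizedD:
  "normalized N v \<Longrightarrow> b \<in> inputs N \<Longrightarrow> (\<And>i. i \<in> cond v \<Longrightarrow> b i \<noteq> None) \<Longrightarrow>
    (\<Sum>x\<in>completions b (eff v). Psi v x) = 1"
  unfolding normalized_def by blast

lemma normalized_Leaf: "normalized N (Leaf i a)"
proof -
  have "b(i := Some True) \<noteq> b(i := Some False)" for b :: input
    by (metis fun_upd_same option.inject)
  then show ?thesis
    by (simp add: normalized_def completions_singleton)
qed

lemma normalized_SumN:
  assumes weights: "sum_list (map fst cs) = 1"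
    and complete: "\<forall>c1\<in>snd ` set cs. \<forall>c2\<in>snd ` set cs. eff c1 = eff c2"
    and children: "\<And>p. p \<in> set cs \<Longrightarrow> normalized N (snd p)"
  shows "normalized N (SumN cs)"
  unfolding normalized_def
proof (intro ballI impI)
  fix b assume b: "b \<in> inputs N" "\<forall>i\<in>cond (SumN cs). b i \<noteq> None"
  define E where "E = eff (SumN cs)"
  define X where "X = completions b E"
  have child_sum: "(\<Sum>x\<in>X. fst (cs ! k) * Psi (snd (cs ! k)) x) = fst (cs ! k)"
    if "k \<in> {0..<length cs}" for k
  proof -
    define c where "c = snd (cs ! k)"
    have "c \<in> snd ` set cs"
      using that unfolding c_def by auto
    then have "eff c = E"
      using complete unfolding E_def eff.simps by blast
    moreover have "sc c \<subseteq> sc (SumN cs)"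
      using \<open>c \<in> snd ` set cs\<close> by auto
    ultimately have "cond c \<subseteq> cond (SumN cs)"
      unfolding cond_def E_def by blast
    moreover have "normalized N c"
      using children[of "cs ! k"] that unfolding c_def by simp
    ultimately have "(\<Sum>x\<in>X. Psi c x) = 1"
      using normalizedD[OF _ b(1)] b(2) \<open>eff c = E\<close> unfolding X_def by blast
    then show ?thesis
      by (simp add: c_def sum_distrib_left[symmetric])
  qed
  have "(\<Sum>x\<in>X. Psi (SumN cs) x) = (\<Sum>x\<in>X. \<Sum>k = 0..<length cs. fst (cs ! k) * Psi (snd (cs ! k)) x)"
    by (simp add: sum_list_sum_nth)
  also have "\<dots> = (\<Sum>k = 0..<length cs. \<Sum>x\<in>X. fst (cs ! k) * Psi (snd (cs ! k)) x)"
    by (rule sum.swap)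
  also have "\<dots> = sum_list (map fst cs)"
    by (simp add: child_sum sum_list_sum_nth)
  finally show "(\<Sum>x\<in>completions b (eff (SumN cs)). Psi (SumN cs) x) = 1"
    using weights by (simp add: X_def E_def)
qed

definition topologically_ordered :: "node list \<Rightarrow> bool" where
  "topologically_ordered ds \<longleftrightarrow>
     sorted_wrt (\<lambda>c d. eff d \<inter> cond c = {} \<and> eff c \<inter> eff d = {}) ds"

lemma normalized_ProdN_ordered:
  assumes "topologically_ordered ds"
    and "\<And>c. c \<in> set ds \<Longrightarrow> normalized N c \<and> eff c \<subseteq> {1..N}"
  shows "normalized N (ProdN ds)"
  using assms
proof (induction ds)
  case Nil
  then show ?case by (simp add: normalized_def completions_empty)
next
  case (Cons c ds)
  define B where "B = eff (ProdN ds)"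
  have c: "normalized N c" "eff c \<subseteq> {1..N}" and rest: "normalized N (ProdN ds)"
    using Cons by (auto simp: topologically_ordered_def)
  have disj: "eff c \<inter> B = {}" "cond c \<inter> B = {}"
    using Cons.prems(1) by (auto simp: B_def topologically_ordered_def)
  then have sc_c: "sc c \<inter> B = {}"
    unfolding cond_def by blast
  show ?case
    unfolding normalized_def
  proof (intro ballI impI)
    fix b assume b: "b \<in> inputs N" "\<forall>i\<in>cond (ProdN (c # ds)). b i \<noteq> None"
    have inner: "(\<Sum>z\<in>completions y B. Psi (ProdN ds) z) = 1"
      if y: "y \<in> completions b (eff c)" for y
    proof -
      have "y \<in> inputs N"
        using completions_subset_inputs[OF b(1) c(2)] y by blast
      moreover have "y i \<noteq> None" if "i \<in> cond (ProdN ds)" for i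
        using y b(2) that unfolding completions_def cond_def by (cases "i \<in> eff c") auto
      ultimately show ?thesis
        unfolding B_def by (rule normalizedD[OF rest])
    qed
    have "(\<Sum>x\<in>completions b (eff (ProdN (c # ds))). Psi (ProdN (c # ds)) x)
        = (\<Sum>y\<in>completions b (eff c). \<Sum>z\<in>completions y B. Psi c z * Psi (ProdN ds) z)"
      using sum_completions_Un[OF finite_eff finite_eff disj(1)[unfolded B_def]]
      by (simp add: B_def)
    also have "\<dots> = (\<Sum>y\<in>completions b (eff c). Psi c y)"
      using Psi_completions[OF sc_c] inner by (simp add: sum_distrib_left[symmetric])
    also have "\<dots> = 1"
    proof -
      have "cond c \<subseteq> cond (ProdN (c # ds))"
        using disj(2) unfolding cond_def B_def by auto
      then show ?thesis
        using normalizedD[OF c(1) b(1)] b(2) by blast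
    qed
    finally show "(\<Sum>x\<in>completions b (eff (ProdN (c # ds))). Psi (ProdN (c # ds)) x) = 1" .
  qed
qed

lemma wf_topological_order:
  assumes "finite S" "wf R"
  shows "\<exists>ks. set ks = S \<and> distinct ks \<and> sorted_wrt (\<lambda>k j. (j, k) \<notin> R) ks"
  using assms(1)
proof (induction S rule: finite_psubset_induct)
  case (psubset S)
  show ?case
  proof (cases "S = {}")
    case False
    then obtain k where k: "k \<in> S" "\<forall>j. (j, k) \<in> R \<longrightarrow> j \<notin> S"
      using assms(2) unfolding wf_eq_minimal by blast
    obtain ks where "set ks = S - {k}" "distinct ks" "sorted_wrt (\<lambda>k j. (j, k) \<notin> R) ks"
      using psubset.IH[of "S - {k}"] k(1) psubset.hyps by blast
    then show ?thesis
      using k by (intro exI[of _ "k # ks"]) auto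
  qed simp
qed

lemma Psi_ProdN_perm: "mset cs = mset ds \<Longrightarrow> Psi (ProdN cs) = Psi (ProdN ds)"
  by (simp add: fun_eq_iff prod_mset_prod_list[symmetric])

lemma normalized_ProdN:
  assumes disjoint: "\<forall>i<length cs. \<forall>j<length cs. i \<noteq> j \<longrightarrow> eff (cs ! i) \<inter> eff (cs ! j) = {}"
    and acyclic: "acyclic {(i, j). i < length cs \<and> j < length cs \<and> eff (cs ! i) \<inter> cond (cs ! j) \<noteq> {}}"
    and children: "\<And>c. c \<in> set cs \<Longrightarrow> normalized N c \<and> eff c \<subseteq> {1..N}"
  shows "normalized N (ProdN cs)"
proof -
  define R where "R = {(i, j). i < length cs \<and> j < length cs \<and> eff (cs ! i) \<inter> cond (cs ! j) \<noteq> {}}"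
  have "finite R"
    by (rule finite_subset[of _ "{..<length cs} \<times> {..<length cs}"]) (auto simp: R_def)
  then have "wf R"
    using acyclic finite_acyclic_wf unfolding R_def by blast
  then obtain ks where ks: "set ks = {..<length cs}" "distinct ks" "sorted_wrt (\<lambda>k j. (j, k) \<notin> R) ks"
    using wf_topological_order[of "{..<length cs}"] by blast
  define ds where "ds = map ((!) cs) ks"
  have "mset ks = mset [0..<length cs]"
    using ks(1,2) by (metis atLeast0LessThan distinct_upt set_eq_iff_mset_eq_distinct set_upt)
  then have perm: "mset ds = mset cs"
    unfolding ds_def by (metis map_nth mset_map)
  have "sorted_wrt (\<lambda>k j. k \<noteq> j \<and> (j, k) \<notin> R) ks"
    using ks(2,3) by (induction ks) auto
  then have "topologically_ordered ds"
    unfolding topologically_ordered_def ds_def sorted_wrt_map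
    by (rule sorted_wrt_mono_rel[rotated]) (use ks(1) disjoint in \<open>auto simp: R_def\<close>)
  moreover have "set ds = set cs"
    using perm by (metis set_mset_mset)
  ultimately have "normalized N (ProdN ds)"
    using children normalized_ProdN_ordered by blast
  moreover have "eff (ProdN ds) = eff (ProdN cs)" "cond (ProdN ds) = cond (ProdN cs)"
    using \<open>set ds = set cs\<close> by (simp_all add: cond_def)
  ultimately show ?thesis
    using Psi_ProdN_perm[OF perm] unfolding normalized_def by simp
qed

lemma normalized_QuotN:
  assumes positive: "\<forall>x\<in>inputs N. Psi d x > 0"
    and cond_d: "cond d \<subseteq> cond n"
    and consistent: "\<forall>a\<in>inputs N. Psi d a = (\<Sum>z\<in>completions a (eff (QuotN n d)). Psi n z)"
  shows "normalized N (QuotN n d)"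
  unfolding normalized_def
proof (intro ballI impI)
  fix b assume b: "b \<in> inputs N"
  have "sc d \<inter> eff (QuotN n d) = {}"
    using cond_d unfolding cond_def by auto
  then have "(\<Sum>x\<in>completions b (eff (QuotN n d)). Psi (QuotN n d) x)
      = (\<Sum>x\<in>completions b (eff (QuotN n d)). Psi n x) / Psi d b"
    by (simp add: Psi_completions sum_divide_distrib)
  also have "\<dots> = 1"
    using positive consistent b by (metis less_irrefl divide_self)
  finally show "(\<Sum>x\<in>completions b (eff (QuotN n d)). Psi (QuotN n d) x) = 1" .
qed

lemma normalized_subnode:
  assumes sp: "spqn N G" and cc: "cond_complete G" and cd: "cond_decomposable G"
    and cs: "cond_sound N G"
  shows "nodes v \<subseteq> nodes G \<Longrightarrow> normalized N v"
proof (induction v rule: node_induct)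
  case Leaf
  show ?case by (rule normalized_Leaf)
next
  case (SumN cs)
  have v: "SumN cs \<in> nodes G"
    using SumN.prems by auto
  have "sum_list (map fst cs) = 1"
    using bspec[OF sp[unfolded spqn_def] v] by simp
  moreover have "\<forall>c1\<in>snd ` set cs. \<forall>c2\<in>snd ` set cs. eff c1 = eff c2"
    using bspec[OF cc[unfolded cond_complete_def] v] by (simp only: node.case)
  moreover have "normalized N (snd p)" if "p \<in> set cs" for p
    by (rule SumN.IH[OF that]) (use that SumN.prems in auto)
  ultimately show ?case
    by (rule normalized_SumN)
next
  case (ProdN cs)
  have v: "ProdN cs \<in> nodes G"
    using ProdN.prems by auto
  have "\<forall>i<length cs. \<forall>j<length cs. i \<noteq> j \<longrightarrow> eff (cs ! i) \<inter> eff (cs ! j) = {}"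
    "acyclic {(i, j). i < length cs \<and> j < length cs \<and> eff (cs ! i) \<inter> cond (cs ! j) \<noteq> {}}"
    using bspec[OF cd[unfolded cond_decomposable_def] v] by simp_all
  moreover have "normalized N c \<and> eff c \<subseteq> {1..N}" if "c \<in> set cs" for c
  proof -
    have "nodes c \<subseteq> nodes G"
      using that ProdN.prems by force
    then show ?thesis
      using ProdN.IH[OF that] sc_subset_vars[OF spqn_subnode[OF _ sp]] eff_subset_sc by blast
  qed
  ultimately show ?case
    by (rule normalized_ProdN)
next
  case (QuotN n d)
  have v: "QuotN n d \<in> nodes G"
    using QuotN.prems by auto
  show ?case
    using bspec[OF cs[unfolded cond_sound_def] v] unfolding node.case by (blast intro: normalized_QuotN)
qed

theorem theorem1:
  fixes N :: nat and G :: node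
  assumes "spqn N G"
    and "cond_complete G"
    and "cond_decomposable G"
    and "cond_sound N G"
  shows "\<forall>v\<in>nodes G. \<forall>b.
           ((\<forall>i\<in>cond v. b i \<noteq> None) \<and> (\<forall>i. i \<notin> cond v \<longrightarrow> b i = None)) \<longrightarrow>
           (\<Sum>x\<in>completions b (eff v). Psi v x) = 1"
proof (intro ballI allI impI)
  fix v and b :: input
  assume v: "v \<in> nodes G"
    and b: "(\<forall>i\<in>cond v. b i \<noteq> None) \<and> (\<forall>i. i \<notin> cond v \<longrightarrow> b i = None)"
  have sub: "nodes v \<subseteq> nodes G"
    using v by (rule nodes_subset)
  have "b \<in> inputs N"
    using b sc_subset_vars[OF spqn_subnode[OF sub assms(1)]]
    unfolding inputs_def cond_def by auto
  moreover have "normalized N v"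
    using normalized_subnode[OF assms sub] .
  ultimately show "(\<Sum>x\<in>completions b (eff v). Psi v x) = 1"
    using normalizedD b by blast
qed

end
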